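(* Let $\gamma,\lambda\in\mathbb{C}$ and let $u,v:\mathbb{Z}^2\to\mathbb{C}$ satisfy, for all $(l,m)\in\mathbb{Z}^2$ (with all denominators nonzero), \[ \frac{\widetilde{\overline u}}{u}=\frac{(\gamma\widetilde u-1)(\gamma-\overline u)}{(\gamma-\widetilde u)(\gamma\overline u-1)},\qquad (1-\gamma\overline u)(\lambda+\gamma\widetilde v)-(\gamma-\overline u)(\gamma-\widetilde{\overline v})u\widetilde v=0, \] \[ (\lambda+\gamma\widetilde v-u\widetilde v)(1-\gamma u+uv)+(1-\gamma^2-\lambda)uv=0,\qquad (1-\gamma u)(\lambda+\gamma v)-(\gamma-u)(\gamma-\overline v)\overline u v=0. \] Then $v$ satisfies, for all $(l,m)$, \[ \begin{aligned} &\gamma^2\big(v-\widetilde{\overline v}\big)\big(\overline v-\widetilde v\big)\big(\lambda+v\overline v\big)\big(\lambda+\widetilde v\widetilde{\overline v}\big)-(1-\gamma^2)(\gamma^2-\lambda)\big(v\overline v-\widetilde v\widetilde{\overline v}\big)^2\\ &\quad+\gamma(1-\gamma^2)\big(v\overline v-\widetilde v\widetilde{\overline v}\big)\Big(\big(\lambda+v\overline v\big)\big(\widetilde v+\widetilde{\overline v}\big)-\big(v+\overline v\big)\big(\lambda+\widetilde v\widetilde{\overline v}\big)\Big)=0. \end{aligned} \]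
   Context: Shift notation: for $f:\mathbb{Z}^2\to\mathbb{C}$, $f=f_{l,m}$, $\overline f=f_{l+1,m}$, $\widetilde f=f_{l,m+1}$, $\widetilde{\overline f}=f_{l+1,m+1}$. *)

theory Defs
  imports "HOL-Analysis.Analysis"
begin

end

theory Submission
  imports Defs
begin

(*
  Solving the horizontal relations e4 and e2 for \bar v and \tilde{\bar v} gives
    (\gamma - u) \bar u (\lambda + v \bar v) = (\lambda + \gamma v) N,
    (\gamma - \bar u) u (\lambda + \tilde v \tilde{\bar v}) = (\lambda + \gamma \tilde v) N,
  with the same factor N = \gamma (u + \bar u) - u \bar u - 1, symmetric in u and \bar u.
  Hence, after clearing denominators, the quad polynomial becomes N^2 times a polynomial
  in u, \bar u, v, \tilde v and \lambda, which vanishes once \lambda is eliminated with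
  the vertical relation e3 (linear in \lambda, with coefficient 1 - \gamma u).
  The cleared denominators are nonzero unless v = 0 or \tilde v = 0; then the relations
  force \lambda = 0 and the quad polynomial degenerates.
*)

(* a, b, p, q, r, s stand for u, \bar u, v, \bar v, \tilde v, \tilde{\bar v};
   horizontal_rel covers e4 and, with u and \bar u swapped, e2. *)

definition quad_rel :: "'a::idom \<Rightarrow> 'a \<Rightarrow> 'a \<Rightarrow> 'a \<Rightarrow> 'a \<Rightarrow> 'a \<Rightarrow> 'a" where
  "quad_rel g lam p q r s =
     g^2 * (p - s) * (q - r) * (lam + p * q) * (lam + r * s)
     - (1 - g^2) * (g^2 - lam) * (p * q - r * s)^2
     + g * (1 - g^2) * (p * q - r * s) * ((lam + p * q) * (r + s) - (p + q) * (lam + r * s))"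

definition horizontal_rel :: "'a::idom \<Rightarrow> 'a \<Rightarrow> 'a \<Rightarrow> 'a \<Rightarrow> 'a \<Rightarrow> 'a \<Rightarrow> 'a" where
  "horizontal_rel g lam x y w z = (1 - g*x) * (lam + g*w) - (g - x) * (g - z) * y * w"

definition vertical_rel :: "'a::idom \<Rightarrow> 'a \<Rightarrow> 'a \<Rightarrow> 'a \<Rightarrow> 'a \<Rightarrow> 'a" where
  "vertical_rel g lam a p r = (lam + g*r - a*r) * (1 - g*a + a*p) + (1 - g^2 - lam) * a * p"

definition quad_rel_reduced :: "'a::idom \<Rightarrow> 'a \<Rightarrow> 'a \<Rightarrow> 'a \<Rightarrow> 'a \<Rightarrow> 'a \<Rightarrow> 'a" where
  "quad_rel_reduced g lam a b p r =
    (let A = (g - a) * b; B = (g - b) * a; P = lam + g*p; R = lam + g*r in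
       g^2 * P * R * (B*r*(p - g) + (1 - g*b)*R) * (A*p*(g - r) - (1 - g*a)*P)
     - (1 - g^2) * (g^2 - lam) * p * r * (P*B - R*A)^2
     + g * (1 - g^2) * (P*B - R*A) *
         (p*P*(B*r*(r + g) - (1 - g*b)*R) - r*R*(A*p*(p + g) - (1 - g*a)*P)))"

lemma quad_rel_clear_denominators:
  assumes "horizontal_rel g lam a b p q = 0" and "horizontal_rel g lam b a r s = 0"
  shows "((g - a) * b)^2 * ((g - b) * a)^2 * p * r * quad_rel g lam p q r s
       = (g*(a + b) - a*b - 1)^2 * quad_rel_reduced g lam a b p r"
  using assms unfolding quad_rel_def horizontal_rel_def quad_rel_reduced_def Let_def
  by algebra

lemma quad_rel_reduced_eq_0:
  assumes "vertical_rel g lam a p r = 0" and "1 - g*a \<noteq> 0"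
  shows "quad_rel_reduced g lam a b p r = 0"
  using assms unfolding vertical_rel_def quad_rel_reduced_def Let_def
  by algebra

lemma quad_rel_degenerate:
  assumes "(1 - g^2) * p = 0"
  shows "quad_rel g 0 p q 0 s = 0"
  using assms unfolding quad_rel_def by algebra

lemma quad_rel_eq_0:
  assumes nz: "a \<noteq> 0" "b \<noteq> 0" "g \<noteq> a" "g \<noteq> b" "g*a \<noteq> 1" "g*b \<noteq> 1"
    and hor: "horizontal_rel g lam a b p q = 0"
    and hor': "horizontal_rel g lam b a r s = 0"
    and ver: "vertical_rel g lam a p r = 0"
  shows "quad_rel g lam p q r s = 0"
proof (cases "p = 0 \<or> r = 0")
  case True
  have "lam = 0 \<and> r = 0 \<and> (1 - g^2) * p = 0"
  proof (cases "p = 0")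
    case True
    with hor nz have "lam = 0" by (simp add: horizontal_rel_def)
    with ver True nz have "r = 0" by (simp add: vertical_rel_def)
    with \<open>lam = 0\<close> True show ?thesis by simp
  next
    case False
    with \<open>p = 0 \<or> r = 0\<close> have "r = 0" by simp
    with hor' nz have "lam = 0" by (simp add: horizontal_rel_def)
    with ver \<open>r = 0\<close> nz have "(1 - g^2) * p = 0" by (simp add: vertical_rel_def)
    with \<open>lam = 0\<close> \<open>r = 0\<close> show ?thesis by simp
  qed
  then show ?thesis using quad_rel_degenerate by blast
next
  case False
  have "quad_rel_reduced g lam a b p r = 0" using quad_rel_reduced_eq_0[OF ver] nz by simp
  then have "((g - a) * b)^2 * ((g - b) * a)^2 * p * r * quad_rel g lam p q r s = 0"
    by (simp add: quad_rel_clear_denominators[OF hor hor'])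
  with nz False show ?thesis by simp
qed

theorem mainTheorem11:
  fixes g lam :: complex and u v :: "int \<Rightarrow> int \<Rightarrow> complex"
  assumes nz: "\<And>l m. u l m \<noteq> 0 \<and> g - u l (m+1) \<noteq> 0 \<and> g * u (l+1) m - 1 \<noteq> 0"
    and e1: "\<And>l m. u (l+1) (m+1) / u l m =
        ((g * u l (m+1) - 1) * (g - u (l+1) m)) / ((g - u l (m+1)) * (g * u (l+1) m - 1))"
    and e2: "\<And>l m. (1 - g * u (l+1) m) * (lam + g * v l (m+1))
        - (g - u (l+1) m) * (g - v (l+1) (m+1)) * u l m * v l (m+1) = 0"
    and e3: "\<And>l m. (lam + g * v l (m+1) - u l m * v l (m+1)) * (1 - g * u l m + u l m * v l m)
        + (1 - g\<^sup>2 - lam) * u l m * v l m = 0"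
    and e4: "\<And>l m. (1 - g * u l m) * (lam + g * v l m)
        - (g - u l m) * (g - v (l+1) m) * u (l+1) m * v l m = 0"
  shows "\<And>l m.
    g\<^sup>2 * (v l m - v (l+1) (m+1)) * (v (l+1) m - v l (m+1))
      * (lam + v l m * v (l+1) m) * (lam + v l (m+1) * v (l+1) (m+1))
    - (1 - g\<^sup>2) * (g\<^sup>2 - lam) * (v l m * v (l+1) m - v l (m+1) * v (l+1) (m+1))\<^sup>2
    + g * (1 - g\<^sup>2) * (v l m * v (l+1) m - v l (m+1) * v (l+1) (m+1))
      * ((lam + v l m * v (l+1) m) * (v l (m+1) + v (l+1) (m+1))
         - (v l m + v (l+1) m) * (lam + v l (m+1) * v (l+1) (m+1))) = 0"
proof -
  fix l m
  have "u l m \<noteq> 0" "u (l+1) m \<noteq> 0" using nz by blast+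
  moreover have "g \<noteq> u l m" "g \<noteq> u (l+1) m"
    using nz[of l "m-1"] nz[of "l+1" "m-1"] by simp_all
  moreover have "g * u l m \<noteq> 1" "g * u (l+1) m \<noteq> 1" using nz[of "l-1" m] nz[of l m] by simp_all
  ultimately have "quad_rel g lam (v l m) (v (l+1) m) (v l (m+1)) (v (l+1) (m+1)) = 0"
    using e2[of l m] e3[of l m] e4[of l m]
    by (intro quad_rel_eq_0) (simp_all add: horizontal_rel_def vertical_rel_def)
  then show "?thesis l m" by (simp add: quad_rel_def)
qed

end
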